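(* Let $G$ be a group and let $A$ be a finite set. Then every subshift $X \subset A^G$ with bounded propagation is strongly irreducible and of finite type.
   Context: $A^G=\{x\colon G\to A\}$ carries the prodiscrete topology and the $G$-shift action $(gx)(h)=x(g^{-1}h)$; a subshift is a closed $G$-invariant subset. For $X\subset A^G$ and $\Omega\subset G$ finite, $X|_\Omega=\{x|_\Omega : x\in X\}\subset A^\Omega$. For a finite $\Delta\subset G$, $X$ has $\Delta$-propagation if: whenever $\Omega\subset G$ is finite and $p\in A^\Omega$ satisfies $p|_{\Omega\cap g\Delta}\in X|_{\Omega\cap g\Delta}$ for all $g\in G$, then $p\in X|_\Omega$. $X$ has bounded propagation if it has $\Delta$-propagation for some finite $\Delta\subset G$. $X$ is of finite type if there are finite $\Omega\subset G$ and $\mathcal P\subset A^\Omega$ with $X=\{x\in A^G:(gx)|_\Omega\in\mathcal P\ \forall g\in G\}$. $X$ is strongly irreducible if there is finite $\Delta\subset G$ such that for all finite $\Omega_1,\Omega_2\subset G$ with $\Omega_1\Delta^{-1}\cap\Omega_2=\varnothing$ and all $x_1,x_2\in X$ there is $x\in X$ with $x|_{\Omega_1}=x_1|_{\Omega_1}$, $x|_{\Omega_2}=x_2|_{\Omega_2}$. *)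

theory Defs
  imports "HOL-Analysis.Analysis"
begin

text \<open>The group G is a type of class group_add (written additively, not
necessarily commutative): g^-1 h is written - g + h.  Configurations are
functions 'g => 'a taking values in the alphabet A.\<close>

definition full_shift :: "'a set \<Rightarrow> ('g \<Rightarrow> 'a) set" where
  "full_shift A = (UNIV \<rightarrow>\<^sub>E A)"

definition prodiscrete :: "'a set \<Rightarrow> ('g \<Rightarrow> 'a) topology" where
  "prodiscrete A = product_topology (\<lambda>_. discrete_topology A) UNIV"

definition shift :: "'g::group_add \<Rightarrow> ('g \<Rightarrow> 'a) \<Rightarrow> ('g \<Rightarrow> 'a)" where
  "shift g x = (\<lambda>h. x (- g + h))"

definition subshift :: "'a set \<Rightarrow> ('g::group_add \<Rightarrow> 'a) set \<Rightarrow> bool" where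
  "subshift A X \<longleftrightarrow> X \<subseteq> full_shift A \<and> closedin (prodiscrete A) X
     \<and> (\<forall>g. \<forall>x\<in>X. shift g x \<in> X)"

definition restr_set :: "('g \<Rightarrow> 'a) set \<Rightarrow> 'g set \<Rightarrow> ('g \<Rightarrow> 'a) set" where
  "restr_set X \<Omega> = (\<lambda>x. restrict x \<Omega>) ` X"

definition left_translate :: "'g::group_add \<Rightarrow> 'g set \<Rightarrow> 'g set" where
  "left_translate g \<Delta> = (\<lambda>d. g + d) ` \<Delta>"

definition has_propagation :: "'a set \<Rightarrow> ('g::group_add \<Rightarrow> 'a) set \<Rightarrow> 'g set \<Rightarrow> bool" where
  "has_propagation A X \<Delta> \<longleftrightarrow>
     (\<forall>\<Omega> p. finite \<Omega> \<longrightarrow> p \<in> \<Omega> \<rightarrow>\<^sub>E A \<longrightarrow>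
        (\<forall>g. restrict p (\<Omega> \<inter> left_translate g \<Delta>) \<in> restr_set X (\<Omega> \<inter> left_translate g \<Delta>))
        \<longrightarrow> p \<in> restr_set X \<Omega>)"

definition bounded_propagation :: "'a set \<Rightarrow> ('g::group_add \<Rightarrow> 'a) set \<Rightarrow> bool" where
  "bounded_propagation A X \<longleftrightarrow> (\<exists>\<Delta>. finite \<Delta> \<and> has_propagation A X \<Delta>)"

definition finite_type :: "'a set \<Rightarrow> ('g::group_add \<Rightarrow> 'a) set \<Rightarrow> bool" where
  "finite_type A X \<longleftrightarrow> (\<exists>\<Omega> P. finite \<Omega> \<and> P \<subseteq> \<Omega> \<rightarrow>\<^sub>E A \<and>
     X = {x \<in> full_shift A. \<forall>g. restrict (shift g x) \<Omega> \<in> P})"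

definition strongly_irreducible :: "('g::group_add \<Rightarrow> 'a) set \<Rightarrow> bool" where
  "strongly_irreducible X \<longleftrightarrow> (\<exists>\<Delta>. finite \<Delta> \<and>
     (\<forall>\<Omega>1 \<Omega>2. finite \<Omega>1 \<longrightarrow> finite \<Omega>2 \<longrightarrow>
        {w + - d | w d. w \<in> \<Omega>1 \<and> d \<in> \<Delta>} \<inter> \<Omega>2 = {} \<longrightarrow>
        (\<forall>x1\<in>X. \<forall>x2\<in>X. \<exists>x\<in>X. (\<forall>h\<in>\<Omega>1. x h = x1 h) \<and> (\<forall>h\<in>\<Omega>2. x h = x2 h))))"

end

theory Submission
  imports Defs
begin

text \<open>Both properties are checked pattern by pattern, and \<open>\<Delta>\<close>-propagation reduces a pattern
to its pieces on the translates \<open>g\<Delta>\<close>.  For strong irreducibility, two patterns that are far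
apart relative to \<open>\<Delta>\<^sup>-\<^sup>1\<Delta>\<close> are glued: no translate \<open>g\<Delta>\<close> meets both, so every piece of the
glued pattern is a piece of one of the two given configurations.  For finite type, the allowed
\<open>\<Delta>\<close>-patterns of \<open>X\<close> form the defining set: a configuration all of whose \<open>\<Delta>\<close>-windows are
allowed has all its finite patterns in \<open>X\<close> by propagation and shift invariance, so it lies in
\<open>X\<close> because \<open>X\<close> is closed.\<close>

lemma topspace_prodiscrete: "topspace (prodiscrete A) = full_shift A"
  unfolding prodiscrete_def full_shift_def by simp

lemma closedin_prodiscrete_finite_restrictions:
  assumes closed: "closedin (prodiscrete A) X" and x: "x \<in> full_shift A"
    and patterns: "\<And>\<Omega>. finite \<Omega> \<Longrightarrow> restrict x \<Omega> \<in> restr_set X \<Omega>"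
  shows "x \<in> X"
proof (rule ccontr)
  assume "x \<notin> X"
  have "openin (product_topology (\<lambda>_. discrete_topology A) UNIV) (full_shift A - X)"
    using closed topspace_prodiscrete unfolding closedin_def prodiscrete_def by metis
  then have "\<forall>z \<in> full_shift A - X. \<exists>U. finite {i \<in> UNIV. U i \<noteq> topspace (discrete_topology A)} \<and>
      (\<forall>i \<in> UNIV. openin (discrete_topology A) (U i)) \<and> z \<in> Pi\<^sub>E UNIV U \<and> Pi\<^sub>E UNIV U \<subseteq> full_shift A - X"
    by (simp only: openin_product_topology_alt)
  then obtain U where "finite {i \<in> UNIV. U i \<noteq> topspace (discrete_topology A)}"
    and x_U: "x \<in> Pi\<^sub>E UNIV U" and U_sub: "Pi\<^sub>E UNIV U \<subseteq> full_shift A - X"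
    using \<open>x \<notin> X\<close> x by (meson DiffI bspec)
  then have "finite {i. U i \<noteq> A}" by simp
  then obtain y where y: "y \<in> X" and xy: "restrict x {i. U i \<noteq> A} = restrict y {i. U i \<noteq> A}"
    using patterns unfolding restr_set_def by force
  have y_A: "y \<in> full_shift A"
    using y closedin_subset[OF closed] topspace_prodiscrete by blast
  have "y i \<in> U i" for i
  proof (cases "U i = A")
    case True
    then show ?thesis using y_A by (auto simp: full_shift_def)
  next
    case False
    then have "y i = x i" using fun_cong[OF xy, of i] by simp
    then show ?thesis using x_U by auto
  qed
  then have "y \<in> Pi\<^sub>E UNIV U" by (simp add: PiE_iff)
  then show False using U_sub y by blast
qed

lemma restrict_shift_left_translate:
  assumes "restrict (shift (- g) x) \<Delta> = restrict y \<Delta>"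
  shows "restrict x (\<Omega> \<inter> left_translate g \<Delta>) = restrict (shift g y) (\<Omega> \<inter> left_translate g \<Delta>)"
proof (rule restrict_ext)
  fix h assume "h \<in> \<Omega> \<inter> left_translate g \<Delta>"
  then obtain d where d: "d \<in> \<Delta>" "h = g + d" unfolding left_translate_def by auto
  then have "x (g + d) = y d"
    using fun_cong[OF assms, of d] by (simp add: shift_def)
  then show "x h = shift g y h" using d by (simp add: shift_def add.assoc[symmetric])
qed

text \<open>\<open>0\<close> is included so that the separation condition forces \<open>\<Omega>1 \<inter> \<Omega>2 = {}\<close> even for \<open>\<Delta> = {}\<close>.\<close>

definition difference_set :: "'g::group_add set \<Rightarrow> 'g set" where
  "difference_set \<Delta> = insert 0 ((\<lambda>(d1, d2). - d2 + d1) ` (\<Delta> \<times> \<Delta>))"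

lemma finite_difference_set: "finite \<Delta> \<Longrightarrow> finite (difference_set \<Delta>)"
  unfolding difference_set_def by simp

lemma separated_disjoint:
  assumes sep: "{w + - d | w d. w \<in> \<Omega>1 \<and> d \<in> difference_set \<Delta>} \<inter> \<Omega>2 = {}"
  shows "\<Omega>1 \<inter> \<Omega>2 = {}"
proof (rule equals0I)
  fix w assume w: "w \<in> \<Omega>1 \<inter> \<Omega>2"
  have "0 \<in> difference_set \<Delta>" unfolding difference_set_def by simp
  then have "w + - 0 \<in> {w + - d | w d. w \<in> \<Omega>1 \<and> d \<in> difference_set \<Delta>}"
    using w by blast
  then have "w \<in> {w + - d | w d. w \<in> \<Omega>1 \<and> d \<in> difference_set \<Delta>}"
    by (simp only: minus_zero add_0_right)
  with w show False using sep by blast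
qed

lemma separated_left_translate:
  assumes sep: "{w + - d | w d. w \<in> \<Omega>1 \<and> d \<in> difference_set \<Delta>} \<inter> \<Omega>2 = {}"
  shows "left_translate g \<Delta> \<inter> \<Omega>1 = {} \<or> left_translate g \<Delta> \<inter> \<Omega>2 = {}"
proof (rule ccontr)
  assume "\<not> ?thesis"
  then obtain d1 d2 where d1: "d1 \<in> \<Delta>" "g + d1 \<in> \<Omega>1" and d2: "d2 \<in> \<Delta>" "g + d2 \<in> \<Omega>2"
    unfolding left_translate_def by blast
  have "- d2 + d1 \<in> difference_set \<Delta>"
    unfolding difference_set_def
    by (intro insertI2 image_eqI[of _ _ "(d1, d2)"]) (use d1 d2 in auto)
  then have "(g + d1) + - (- d2 + d1) \<in> {w + - d | w d. w \<in> \<Omega>1 \<and> d \<in> difference_set \<Delta>}"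
    using d1(2) by blast
  moreover have "(g + d1) + - (- d2 + d1) = g + d2"
    by (simp add: add.assoc minus_add)
  ultimately have "g + d2 \<in> {w + - d | w d. w \<in> \<Omega>1 \<and> d \<in> difference_set \<Delta>}"
    by (simp only:)
  with d2(2) show False using sep by blast
qed

lemma restrict_in_restr_set: "x \<in> X \<Longrightarrow> restrict x \<Omega> \<in> restr_set X \<Omega>"
  unfolding restr_set_def by (rule imageI)

lemma restr_set_subset_PiE:
  assumes "X \<subseteq> full_shift A"
  shows "restr_set X \<Omega> \<subseteq> \<Omega> \<rightarrow>\<^sub>E A"
proof
  fix q assume "q \<in> restr_set X \<Omega>"
  then obtain x where "x \<in> X" and q: "q = restrict x \<Omega>" unfolding restr_set_def by blast
  then have "x \<in> UNIV \<rightarrow>\<^sub>E A" using assms unfolding full_shift_def by blast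
  then show "q \<in> \<Omega> \<rightarrow>\<^sub>E A" unfolding q by (simp add: PiE_iff)
qed

lemma has_propagation_imp_strongly_irreducible:
  assumes "finite \<Delta>" and propagation: "has_propagation A X \<Delta>" and X_A: "X \<subseteq> full_shift A"
  shows "strongly_irreducible X"
  unfolding strongly_irreducible_def
proof (intro exI[of _ "difference_set \<Delta>"] conjI allI impI ballI)
  show "finite (difference_set \<Delta>)" using assms(1) by (rule finite_difference_set)
  fix \<Omega>1 \<Omega>2 x1 x2
  assume fin: "finite \<Omega>1" "finite \<Omega>2"
    and sep: "{w + - d | w d. w \<in> \<Omega>1 \<and> d \<in> difference_set \<Delta>} \<inter> \<Omega>2 = {}"
    and x1: "x1 \<in> X" and x2: "x2 \<in> X"
  define \<Omega> where "\<Omega> = \<Omega>1 \<union> \<Omega>2"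
  define p where "p = restrict (\<lambda>h. if h \<in> \<Omega>1 then x1 h else x2 h) \<Omega>"
  have "restrict x1 \<Omega> \<in> \<Omega> \<rightarrow>\<^sub>E A" "restrict x2 \<Omega> \<in> \<Omega> \<rightarrow>\<^sub>E A"
    using x1 x2 restr_set_subset_PiE[OF X_A] restrict_in_restr_set by blast+
  then have p_A: "p \<in> \<Omega> \<rightarrow>\<^sub>E A"
    unfolding p_def by (auto simp: PiE_iff)
  have "restrict p (\<Omega> \<inter> left_translate g \<Delta>) \<in> restr_set X (\<Omega> \<inter> left_translate g \<Delta>)" for g
    using separated_left_translate[OF sep, of g]
  proof
    assume "left_translate g \<Delta> \<inter> \<Omega>1 = {}"
    then have "restrict p (\<Omega> \<inter> left_translate g \<Delta>) = restrict x2 (\<Omega> \<inter> left_translate g \<Delta>)"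
      by (intro restrict_ext) (auto simp: p_def)
    then show ?thesis using restrict_in_restr_set[OF x2] by simp
  next
    assume "left_translate g \<Delta> \<inter> \<Omega>2 = {}"
    then have "restrict p (\<Omega> \<inter> left_translate g \<Delta>) = restrict x1 (\<Omega> \<inter> left_translate g \<Delta>)"
      by (intro restrict_ext) (auto simp: p_def \<Omega>_def)
    then show ?thesis using restrict_in_restr_set[OF x1] by simp
  qed
  then have "p \<in> restr_set X \<Omega>"
    using propagation fin p_A unfolding has_propagation_def \<Omega>_def by blast
  then obtain x where "x \<in> X" and x_p: "restrict x \<Omega> = p"
    unfolding restr_set_def by auto
  have "x h = x1 h" if "h \<in> \<Omega>1" for h
    using fun_cong[OF x_p, of h] that by (simp add: p_def \<Omega>_def)
  moreover have "x h = x2 h" if "h \<in> \<Omega>2" for h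
    using fun_cong[OF x_p, of h] that separated_disjoint[OF sep] by (auto simp: p_def \<Omega>_def)
  ultimately show "\<exists>x\<in>X. (\<forall>h\<in>\<Omega>1. x h = x1 h) \<and> (\<forall>h\<in>\<Omega>2. x h = x2 h)"
    using \<open>x \<in> X\<close> by blast
qed

lemma has_propagation_imp_eq_allowed_windows:
  assumes sub: "subshift A X" and propagation: "has_propagation A X \<Delta>"
  shows "X = {x \<in> full_shift A. \<forall>g. restrict (shift g x) \<Delta> \<in> restr_set X \<Delta>}"
proof
  show "X \<subseteq> {x \<in> full_shift A. \<forall>g. restrict (shift g x) \<Delta> \<in> restr_set X \<Delta>}"
    using sub unfolding subshift_def restr_set_def by blast
next
  show "{x \<in> full_shift A. \<forall>g. restrict (shift g x) \<Delta> \<in> restr_set X \<Delta>} \<subseteq> X"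
  proof clarify
    fix x assume x_A: "x \<in> full_shift A"
      and windows: "\<forall>g. restrict (shift g x) \<Delta> \<in> restr_set X \<Delta>"
    have "restrict x (\<Omega> \<inter> left_translate g \<Delta>) \<in> restr_set X (\<Omega> \<inter> left_translate g \<Delta>)" for \<Omega> g
    proof -
      obtain y where "y \<in> X" and "restrict (shift (- g) x) \<Delta> = restrict y \<Delta>"
        using windows unfolding restr_set_def by blast
      moreover have "shift g y \<in> X" using sub \<open>y \<in> X\<close> unfolding subshift_def by blast
      ultimately show ?thesis
        using restrict_shift_left_translate unfolding restr_set_def by blast
    qed
    moreover have "restrict x \<Omega> \<in> \<Omega> \<rightarrow>\<^sub>E A" for \<Omega>
      using x_A unfolding full_shift_def by auto
    ultimately have "restrict x \<Omega> \<in> restr_set X \<Omega>" if "finite \<Omega>" for \<Omega>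
      using propagation that unfolding has_propagation_def by (simp add: Int_absorb)
    then show "x \<in> X"
      using sub x_A closedin_prodiscrete_finite_restrictions unfolding subshift_def by blast
  qed
qed

lemma has_propagation_imp_finite_type:
  assumes "finite \<Delta>" and sub: "subshift A X" and propagation: "has_propagation A X \<Delta>"
  shows "finite_type A X"
  unfolding finite_type_def
proof (intro exI[of _ \<Delta>] exI[of _ "restr_set X \<Delta>"] conjI)
  show "restr_set X \<Delta> \<subseteq> \<Delta> \<rightarrow>\<^sub>E A"
    using sub unfolding subshift_def by (intro restr_set_subset_PiE) blast
  show "X = {x \<in> full_shift A. \<forall>g. restrict (shift g x) \<Delta> \<in> restr_set X \<Delta>}"
    using sub propagation by (rule has_propagation_imp_eq_allowed_windows)
qed fact

theorem proposition2p9: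
  fixes A :: "'a set" and X :: "('g::group_add \<Rightarrow> 'a) set"
  assumes "finite A"
    and "subshift A X"
    and "bounded_propagation A X"
  shows "strongly_irreducible X \<and> finite_type A X"
proof -
  obtain \<Delta> where "finite \<Delta>" and "has_propagation A X \<Delta>"
    using assms(3) unfolding bounded_propagation_def by blast
  moreover have "X \<subseteq> full_shift A" using assms(2) unfolding subshift_def by blast
  ultimately show ?thesis
    using assms(2) has_propagation_imp_strongly_irreducible has_propagation_imp_finite_type
    by blast
qed

end
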